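(* Let $V\subseteq B(H)\otimes N$ be a quantum multi-relation on $(M,N)$, with $M$ and $N$ minimally represented on $H$ and $K$. Then the adjacency operators $\mathcal{A}_{\mathcal{P}_V}$, $\mathcal{A}_{\mathcal{S}_V}$ and $\mathcal{A}_{\mathcal{P}_{\tilde V}}$ are completely positive maps. Moreover, $\mathcal{A}_{\mathcal{P}_V}$ and $\mathcal{A}_{\mathcal{P}_{\tilde V}}$ satisfy the Schur idempotent condition $$m(\mathcal{A}_{\mathcal{P}_V}\otimes\mathcal{A}_{\mathcal{P}_V})m^*=\mathcal{A}_{\mathcal{P}_V},\qquad m(\mathcal{A}_{\mathcal{P}_{\tilde V}}\otimes\mathcal{A}_{\mathcal{P}_{\tilde V}})m^*=\mathcal{A}_{\mathcal{P}_{\tilde V}},$$ where $\mathcal{A}_{\mathcal{P}_V}\in B(L^2(M)\otimes L^2(N))$ and $\mathcal{A}_{\mathcal{P}_{\tilde V}}\in B(L^2(M))$, and $m$ denotes the multiplication of $M\otimes N$, resp. $M$.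
   Context: All Hilbert spaces are finite dimensional. $M\subseteq B(H)$, $N\subseteq B(K)$ are finite-dimensional von Neumann algebras, minimally represented: $M'=Z(M)$, $N'=Z(N)$. $A^{op}$ is the opposite algebra. A quantum multi-relation on $(M,N)$ is a subspace $V\subseteq B(H)\otimes N$ which is an $(M'\otimes1)$–$(M'\otimes1)$ bimodule with $(1\otimes Z(N))V\subseteq V$. Weaver actions: $M\otimes M^{op}$ acts on $B(H)$ by $\pi(T_1\otimes T_2)S=T_1ST_2$, and $M\otimes M^{op}\otimes N\otimes N^{op}$ acts on $B(H\otimes K)$ by $\pi(T_1\otimes T_2\otimes T_3\otimes T_4)(S_1\otimes S_2)=T_1S_1T_2\otimes T_3S_2T_4$; operator spaces carry Hilbert–Schmidt inner products. $\mathcal{P}_V$ is the projection in $M\otimes M^{op}\otimes N\otimes N^{op}$ with $\pi(\mathcal{P}_V)$ the orthogonal projection onto $V$. $\tilde V=(\mathrm{id}\otimes\mathrm{tr}_K)(V)\subseteq B(H)$ is the underlying single-edged graph, and $\mathcal{P}_{\tilde V}$ the projection in $M\otimes M^{op}$ with $\pi(\mathcal{P}_{\tilde V})$ the orthogonal projection onto $\tilde V$. $\mathcal{S}_V=(\mathrm{id}\otimes\mathrm{id}\otimes\mathrm{tr}_K)(\mathrm{id}\otimes\mathrm{id}\otimes m_N)(\mathcal{P}_V)\in M\otimes M^{op}$ with $m_N(a\otimes b)=ab$. Adjacency operators: $\mathcal{A}_{\mathcal{P}_V}(m\otimes n)=(\mathrm{tr}_H\otimes\mathrm{id}\otimes\mathrm{tr}_K\otimes\mathrm{id})(\mathcal{P}_V(m\otimes1\otimes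 n\otimes1))$ on $M\otimes N$; $\mathcal{A}_{\mathcal{S}_V}(m)=(\mathrm{tr}_H\otimes\mathrm{id})(\mathcal{S}_V(m\otimes1))$ and $\mathcal{A}_{\mathcal{P}_{\tilde V}}(m)=(\mathrm{tr}_H\otimes\mathrm{id})(\mathcal{P}_{\tilde V}(m\otimes1))$ on $M$ (outputs in $A^{op}$ identified with $A$ as vector spaces). $L^2(M)$, $L^2(N)$ are $M,N$ with Hilbert–Schmidt inner products from $\mathrm{tr}_H,\mathrm{tr}_K$, and $m^*$ is the adjoint of multiplication $L^2\otimes L^2\to L^2$. *)

theory Defs
  imports "HOL-Analysis.Analysis"
begin

(* H = C^'n, K = C^'k for finite index types 'n, 'k.
   B(H) = complex^'n^'n, B(H \<otimes> K) = complex^('n\<times>'k)^('n\<times>'k) (Kronecker identification).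
   tr = the (unnormalised) matrix trace. *)

definition madj :: "complex^'i^'i \<Rightarrow> complex^'i^'i" where
  "madj A = (\<chi> i j. cnj (A$j$i))"

definition mtr :: "complex^'i^'i \<Rightarrow> complex" where
  "mtr A = (\<Sum>i\<in>UNIV. A$i$i)"

definition hs_inner :: "complex^'i^'i \<Rightarrow> complex^'i^'i \<Rightarrow> complex" where
  "hs_inner A B = mtr (madj A ** B)"

definition msc :: "complex \<Rightarrow> complex^'i^'j \<Rightarrow> complex^'i^'j" where
  "msc c A = (\<chi> i j. c * A$i$j)"

definition munit :: "'i \<Rightarrow> 'i \<Rightarrow> complex^'i^'i" where
  "munit p q = (\<chi> i j. if i = p \<and> j = q then 1 else 0)"

definition csubspace :: "(complex^'i^'j) set \<Rightarrow> bool" where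
  "csubspace S \<longleftrightarrow> 0 \<in> S \<and> (\<forall>x\<in>S. \<forall>y\<in>S. x + y \<in> S) \<and> (\<forall>c. \<forall>x\<in>S. msc c x \<in> S)"

definition cspan :: "(complex^'i^'j) set \<Rightarrow> (complex^'i^'j) set" where
  "cspan S = \<Inter>{T. csubspace T \<and> S \<subseteq> T}"

definition fd_vNa :: "(complex^'i^'i) set \<Rightarrow> bool" where
  "fd_vNa M \<longleftrightarrow> csubspace M \<and> mat 1 \<in> M \<and> (\<forall>x\<in>M. \<forall>y\<in>M. x ** y \<in> M)
      \<and> (\<forall>x\<in>M. madj x \<in> M)"

definition commutant :: "(complex^'i^'i) set \<Rightarrow> (complex^'i^'i) set" where
  "commutant M = {T. \<forall>A\<in>M. T ** A = A ** T}"

definition center :: "(complex^'i^'i) set \<Rightarrow> (complex^'i^'i) set" where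
  "center M = M \<inter> commutant M"

definition minimally_represented :: "(complex^'i^'i) set \<Rightarrow> bool" where
  "minimally_represented M \<longleftrightarrow> commutant M = center M"

definition kron :: "complex^'a^'a \<Rightarrow> complex^'b^'b \<Rightarrow> complex^('a\<times>'b)^('a\<times>'b)" where
  "kron A B = (\<chi> ip jq. A$(fst ip)$(fst jq) * B$(snd ip)$(snd jq))"

definition alg_tensor :: "(complex^'a^'a) set \<Rightarrow> (complex^'b^'b) set
      \<Rightarrow> (complex^('a\<times>'b)^('a\<times>'b)) set" where
  "alg_tensor M N = cspan {kron x y | x y. x \<in> M \<and> y \<in> N}"

definition q_multi_relation :: "(complex^'n^'n) set \<Rightarrow> (complex^'k^'k) set
      \<Rightarrow> (complex^('n\<times>'k)^('n\<times>'k)) set \<Rightarrow> bool" where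
  "q_multi_relation M N V \<longleftrightarrow> csubspace V \<and> V \<subseteq> alg_tensor UNIV N
     \<and> (\<forall>a\<in>commutant M. \<forall>X\<in>V. kron a (mat 1) ** X \<in> V \<and> X ** kron a (mat 1) \<in> V)
     \<and> (\<forall>z\<in>center N. \<forall>X\<in>V. kron (mat 1) z ** X \<in> V)"

definition orth_proj :: "(complex^'i^'i) set \<Rightarrow> complex^'i^'i \<Rightarrow> complex^'i^'i" where
  "orth_proj V X = (THE Y. Y \<in> V \<and> (\<forall>Z\<in>V. hs_inner Z (X - Y) = 0))"

(* ---- B(H) \<otimes> B(H)^op \<otimes> B(K) \<otimes> B(K)^op ----
   An element T is stored by its coefficients: T$(a,c,e,g)$(b,d,f,h) is the coefficient
   of e_ab \<otimes> e_cd \<otimes> e_ef \<otimes> e_gh (op-factors stored as plain matrices, i.e. the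
   vector space identification A^op = A). *)
type_synonym ('n,'k) t4 = "complex^('n\<times>'n\<times>'k\<times>'k)^('n\<times>'n\<times>'k\<times>'k)"

(* multiplication in B(H) \<otimes> B(H)^op \<otimes> B(K) \<otimes> B(K)^op (reversed product in op-slots) *)
definition mult4 :: "('n::finite,'k::finite) t4 \<Rightarrow> ('n,'k) t4 \<Rightarrow> ('n,'k) t4" where
  "mult4 X Y = vec_lambda (\<lambda>(a,c,e,g). vec_lambda (\<lambda>(b,d,f,h).
     \<Sum>x\<in>UNIV. \<Sum>y\<in>UNIV. \<Sum>z\<in>UNIV. \<Sum>w\<in>UNIV.
        X$(a,y,e,w)$(x,d,z,h) * Y$(x,c,z,g)$(b,y,f,w)))"

(* Weaver action: linear extension of
   pi(T1\<otimes>T2\<otimes>T3\<otimes>T4)(S1\<otimes>S2) = T1 S1 T2 \<otimes> T3 S2 T4 *)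
definition pi4 :: "('n::finite,'k::finite) t4 \<Rightarrow> complex^('n\<times>'k)^('n\<times>'k)
      \<Rightarrow> complex^('n\<times>'k)^('n\<times>'k)" where
  "pi4 T S = vec_lambda (\<lambda>(a,e). vec_lambda (\<lambda>(d,h).
     \<Sum>b\<in>UNIV. \<Sum>c\<in>UNIV. \<Sum>f\<in>UNIV. \<Sum>g\<in>UNIV. T$(a,c,e,g)$(b,d,f,h) * S$(b,f)$(c,g)))"

definition P_V :: "(complex^('n::finite\<times>'k::finite)^('n\<times>'k)) set \<Rightarrow> ('n,'k) t4" where
  "P_V V = (THE T. pi4 T = orth_proj V)"

(* (m \<otimes> n) \<mapsto> m \<otimes> 1 \<otimes> n \<otimes> 1, extended linearly from B(H \<otimes> K) *)
definition emb4 :: "complex^('n::finite\<times>'k::finite)^('n\<times>'k) \<Rightarrow> ('n,'k) t4" where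
  "emb4 X = vec_lambda (\<lambda>(a,c,e,g). vec_lambda (\<lambda>(b,d,f,h).
     X$(a,e)$(b,f) * (if c = d then 1 else 0) * (if g = h then 1 else 0)))"

(* tr_H \<otimes> id \<otimes> tr_K \<otimes> id, output in B(H)^op \<otimes> B(K)^op identified with B(H \<otimes> K) *)
definition ptr13 :: "('n::finite,'k::finite) t4 \<Rightarrow> complex^('n\<times>'k)^('n\<times>'k)" where
  "ptr13 Y = vec_lambda (\<lambda>(c,g). vec_lambda (\<lambda>(d,h).
     \<Sum>a\<in>UNIV. \<Sum>e\<in>UNIV. Y$(a,c,e,g)$(a,d,e,h)))"

definition A_PV :: "(complex^('n::finite\<times>'k::finite)^('n\<times>'k)) set
      \<Rightarrow> complex^('n\<times>'k)^('n\<times>'k) \<Rightarrow> complex^('n\<times>'k)^('n\<times>'k)" where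
  "A_PV V X = ptr13 (mult4 (P_V V) (emb4 X))"

(* ---- B(H) \<otimes> B(H)^op : T$(a,c)$(b,d) = coefficient of e_ab \<otimes> e_cd ---- *)
definition mult2 :: "complex^('n\<times>'n)^('n\<times>'n) \<Rightarrow> complex^('n\<times>'n)^('n\<times>'n)
      \<Rightarrow> complex^('n\<times>'n)^('n::finite\<times>'n)" where
  "mult2 X Y = vec_lambda (\<lambda>(a,c). vec_lambda (\<lambda>(b,d).
     \<Sum>x\<in>UNIV. \<Sum>y\<in>UNIV. X$(a,y)$(x,d) * Y$(x,c)$(b,y)))"

(* pi(T1 \<otimes> T2) S = T1 S T2, extended linearly *)
definition pi2 :: "complex^('n::finite\<times>'n)^('n\<times>'n) \<Rightarrow> complex^'n^'n \<Rightarrow> complex^'n^'n" where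
  "pi2 T S = (\<chi> a d. \<Sum>b\<in>UNIV. \<Sum>c\<in>UNIV. T$(a,c)$(b,d) * S$b$c)"

(* m \<mapsto> m \<otimes> 1 *)
definition emb2 :: "complex^'n^'n \<Rightarrow> complex^('n::finite\<times>'n)^('n\<times>'n)" where
  "emb2 m = vec_lambda (\<lambda>(a,c). vec_lambda (\<lambda>(b,d). m$a$b * (if c = d then 1 else 0)))"

(* tr_H \<otimes> id, output in B(H)^op identified with B(H) *)
definition ptr1 :: "complex^('n::finite\<times>'n)^('n\<times>'n) \<Rightarrow> complex^'n^'n" where
  "ptr1 Y = (\<chi> c d. \<Sum>a\<in>UNIV. Y$(a,c)$(a,d))"

definition ptrK :: "complex^('n\<times>'k::finite)^('n\<times>'k) \<Rightarrow> complex^'n^'n" where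
  "ptrK X = (\<chi> i j. \<Sum>p\<in>(UNIV::'k set). X$(i,p)$(j,p))"

definition V_tilde :: "(complex^('n\<times>'k::finite)^('n\<times>'k)) set \<Rightarrow> (complex^'n^'n) set" where
  "V_tilde V = ptrK ` V"

definition P_Vt :: "(complex^('n::finite\<times>'k::finite)^('n\<times>'k)) set
      \<Rightarrow> complex^('n\<times>'n)^('n\<times>'n)" where
  "P_Vt V = (THE T. pi2 T = orth_proj (V_tilde V))"

definition A_PVt :: "(complex^('n::finite\<times>'k::finite)^('n\<times>'k)) set
      \<Rightarrow> complex^'n^'n \<Rightarrow> complex^'n^'n" where
  "A_PVt V m = ptr1 (mult2 (P_Vt V) (emb2 m))"

(* id \<otimes> id \<otimes> m_K : B(H)\<otimes>B(H)^op\<otimes>B(K)\<otimes>B(K)^op \<rightarrow> B(H)\<otimes>B(H)^op\<otimes>B(K),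
   m(e_ef \<otimes> e_gh) = e_ef e_gh *)
definition id_id_mult :: "('n::finite,'k::finite) t4
      \<Rightarrow> complex^('n\<times>'n\<times>'k)^('n\<times>'n\<times>'k)" where
  "id_id_mult T = vec_lambda (\<lambda>(a,c,e). vec_lambda (\<lambda>(b,d,h).
     \<Sum>f\<in>UNIV. T$(a,c,e,f)$(b,d,f,h)))"

definition ptr3 :: "complex^('n::finite\<times>'n\<times>'k::finite)^('n\<times>'n\<times>'k) \<Rightarrow> complex^('n\<times>'n)^('n\<times>'n)" where
  "ptr3 R = vec_lambda (\<lambda>(a,c). vec_lambda (\<lambda>(b,d).
     \<Sum>e\<in>(UNIV::'k set). R$(a,c,e)$(b,d,e)))"

definition S_V :: "(complex^('n::finite\<times>'k::finite)^('n\<times>'k)) set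
      \<Rightarrow> complex^('n\<times>'n)^('n\<times>'n)" where
  "S_V V = ptr3 (id_id_mult (P_V V))"

definition A_SV :: "(complex^('n::finite\<times>'k::finite)^('n\<times>'k)) set
      \<Rightarrow> complex^'n^'n \<Rightarrow> complex^'n^'n" where
  "A_SV V m = ptr1 (mult2 (S_V V) (emb2 m))"

definition cinner :: "complex^'i \<Rightarrow> complex^'i \<Rightarrow> complex" where
  "cinner u w = (\<Sum>k\<in>UNIV. cnj (u$k) * w$k)"

(* the r\<times>r block operator matrix [a i j] is a positive operator on H^r *)
definition block_pos :: "nat \<Rightarrow> (nat \<Rightarrow> nat \<Rightarrow> complex^'i^'i) \<Rightarrow> bool" where
  "block_pos r a \<longleftrightarrow> (\<forall>v :: nat \<Rightarrow> complex^'i.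
     Im (\<Sum>i<r. \<Sum>j<r. cinner (v i) (a i j *v v j)) = 0
     \<and> 0 \<le> Re (\<Sum>i<r. \<Sum>j<r. cinner (v i) (a i j *v v j)))"

definition cp_on :: "(complex^'i^'i) set \<Rightarrow> (complex^'i^'i \<Rightarrow> complex^'i^'i) \<Rightarrow> bool" where
  "cp_on A \<Phi> \<longleftrightarrow> (\<forall>r a. (\<forall>i<r. \<forall>j<r. a i j \<in> A) \<longrightarrow> block_pos r a
        \<longrightarrow> block_pos r (\<lambda>i j. \<Phi> (a i j)))"

(* multiplication m : L^2(A) \<otimes> L^2(A) \<rightarrow> L^2(A), linear extension of x \<otimes> y \<mapsto> x y *)
definition mmult :: "complex^('i::finite\<times>'i)^('i\<times>'i) \<Rightarrow> complex^'i^'i" where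
  "mmult W = (\<chi> i j. \<Sum>k\<in>(UNIV::'i set). W$(i,k)$(k,j))"

definition mstar :: "(complex^'i^'i) set \<Rightarrow> complex^'i^'i \<Rightarrow> complex^('i::finite\<times>'i)^('i\<times>'i)" where
  "mstar A z = (THE w. w \<in> alg_tensor A A
      \<and> (\<forall>u\<in>alg_tensor A A. hs_inner w u = hs_inner z (mmult u)))"

(* \<Phi> \<otimes> \<Phi>, linear extension of x \<otimes> y \<mapsto> \<Phi> x \<otimes> \<Phi> y *)
definition tmap :: "(complex^'i^'i \<Rightarrow> complex^'i^'i) \<Rightarrow> complex^('i\<times>'i)^('i\<times>'i)
      \<Rightarrow> complex^('i::finite\<times>'i)^('i\<times>'i)" where
  "tmap \<Phi> W = (\<Sum>p\<in>UNIV. \<Sum>q\<in>UNIV. \<Sum>r\<in>UNIV. \<Sum>s\<in>UNIV.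
      msc (W$(p,r)$(q,s)) (kron (\<Phi> (munit p q)) (\<Phi> (munit r s))))"

definition schur_idempotent :: "(complex^'i^'i) set \<Rightarrow> (complex^'i^'i \<Rightarrow> complex^'i^'i)
      \<Rightarrow> bool" where
  "schur_idempotent A \<Phi> \<longleftrightarrow> (\<forall>z\<in>A. mmult (tmap \<Phi> (mstar A z)) = \<Phi> z)"

end

theory Submission
  imports Defs
begin

text \<open>Let \<open>P\<close> be the Hilbert--Schmidt orthogonal projection onto \<open>V\<close> (or onto the underlying
  single-edged graph). In matrix coordinates the adjacency operator is \<open>X \<mapsto> \<Sum>\<^sub>u\<^sub>,\<^sub>w \<langle>P e\<^sub>u\<^sub>t, P e\<^sub>w\<^sub>s\<rangle> X\<^sub>w\<^sub>u\<close>: its kernel is a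
  Gram matrix, so the map has a Kraus decomposition and is completely positive; the same holds
  for \<open>\<A>\<^sub>S\<close>, whose kernel is the Gram matrix of the projections of the \<open>e\<^sub>w\<^sub>s \<otimes> 1\<close>.
  On all of \<open>B(H)\<close>, Schur idempotency is just \<open>P\<^sup>2 = P\<close>. To replace \<open>m\<^sup>*\<close> of \<open>B(H)\<close> by
  \<open>m\<^sup>*\<close> of the algebra, which is its projection onto \<open>A \<otimes> A\<close>, note that the entries of
  \<open>\<Phi> \<otimes> \<Phi>\<close> are inner products with tensors of slices of \<open>P\<close>. The bimodule property of \<open>V\<close>
  makes these slices commute with \<open>M' \<otimes> 1\<close> and with \<open>1 \<otimes> Z(N) = 1 \<otimes> N'\<close> (minimality of \<open>N\<close>),
  so by the double commutant theorem they lie in the algebra.\<close>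

lemma sum_UNIV_prod:
  "(\<Sum>u\<in>(UNIV::('a::finite \<times> 'b::finite) set). f u) = (\<Sum>a\<in>UNIV. \<Sum>b\<in>UNIV. f (a, b))"
proof -
  have "(\<Sum>u\<in>(UNIV::('a\<times>'b) set). f u) = (\<Sum>u\<in>UNIV\<times>UNIV. f u)" by simp
  then show ?thesis by (simp add: sum.cartesian_product)
qed

lemma sum_rotate3:
  "(\<Sum>t\<in>A. \<Sum>u\<in>B. \<Sum>w\<in>C. f t u w) = (\<Sum>u\<in>B. \<Sum>w\<in>C. \<Sum>t\<in>A. f t u w)"
  by (subst sum.swap) (rule sum.cong[OF refl], rule sum.swap)

lemma sum_rotate4:
  "(\<Sum>t\<in>A. \<Sum>u\<in>B. \<Sum>w\<in>C. \<Sum>x\<in>D. f t u w x)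
    = (\<Sum>u\<in>B. \<Sum>w\<in>C. \<Sum>x\<in>D. \<Sum>t\<in>A. f t u w x)"
  by (subst sum.swap) (rule sum.cong[OF refl], rule sum_rotate3)

lemma msc_nth [simp]: "msc c A $ i $ j = c * A $ i $ j"
  by (simp add: msc_def)

lemma madj_nth [simp]: "madj A $ i $ j = cnj (A $ j $ i)"
  by (simp add: madj_def)

lemma munit_nth [simp]: "munit p q $ i $ j = (if i = p \<and> j = q then 1 else 0)"
  by (simp add: munit_def)

lemma kron_nth [simp]: "kron A B $ (i, k) $ (j, l) = A $ i $ j * B $ k $ l"
  by (simp add: kron_def)

lemma mat_one_nth: "(mat 1 :: complex^'i^'i) $ k $ l = (if k = l then 1 else 0)"
  by (simp add: mat_def)

lemma matrix_mult_nth: "(A ** B) $ i $ j = (\<Sum>k\<in>UNIV. A $ i $ k * B $ k $ j)"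
  by (simp add: matrix_matrix_mult_def)

lemma mmult_nth: "mmult W $ i $ j = (\<Sum>k\<in>UNIV. W $ (i, k) $ (k, j))"
  by (simp add: mmult_def)

lemma if_zero_simps:
  "(x::complex) * (if P then y else 0) = (if P then x * y else 0)"
  "(if P then (x::complex) else 0) * y = (if P then x * y else 0)"
  "(if P \<and> Q then (x::complex) else 0) = (if P then if Q then x else 0 else 0)"
  "(\<Sum>x\<in>A. if P then f x else (0::complex)) = (if P then \<Sum>x\<in>A. f x else 0)"
  "cnj (if P then x else 0) = (if P then cnj x else 0)"
  by simp_all

lemma madj_madj [simp]: "madj (madj A) = A"
  by (simp add: vec_eq_iff)

lemma madj_mult: "madj (A ** B) = madj B ** madj A"
  by (simp add: vec_eq_iff matrix_mult_nth mult.commute)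

lemma madj_kron: "madj (kron A B) = kron (madj A) (madj B)"
  by (simp add: vec_eq_iff)

lemma madj_mat_one: "madj (mat 1 :: complex^'i^'i) = mat 1"
  by (simp add: vec_eq_iff mat_one_nth)

lemma matrix_eq_sum_munit: "X = (\<Sum>c\<in>UNIV. \<Sum>d\<in>UNIV. msc (X $ c $ d) (munit c d))"
  by (simp add: vec_eq_iff sum_component if_zero_simps cong del: if_weak_cong)

lemma hs_inner_entrywise: "hs_inner A B = (\<Sum>i\<in>UNIV. \<Sum>j\<in>UNIV. cnj (A $ i $ j) * B $ i $ j)"
  unfolding hs_inner_def mtr_def matrix_mult_nth madj_nth by (rule sum.swap)

lemma hs_inner_zero_right: "hs_inner A 0 = 0"
  by (simp add: hs_inner_entrywise)

lemma hs_inner_diff_left: "hs_inner (A - B) C = hs_inner A C - hs_inner B C"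
  by (simp add: hs_inner_entrywise algebra_simps sum_subtractf)

lemma hs_inner_add_right: "hs_inner A (B + C) = hs_inner A B + hs_inner A C"
  by (simp add: hs_inner_entrywise algebra_simps sum.distrib)

lemma hs_inner_diff_right: "hs_inner A (B - C) = hs_inner A B - hs_inner A C"
  by (simp add: hs_inner_entrywise algebra_simps sum_subtractf)

lemma hs_inner_msc_left: "hs_inner (msc c A) B = cnj c * hs_inner A B"
  by (simp add: hs_inner_entrywise sum_distrib_left algebra_simps)

lemma hs_inner_msc_right: "hs_inner A (msc c B) = c * hs_inner A B"
  by (simp add: hs_inner_entrywise sum_distrib_left algebra_simps)

lemma hs_inner_cnj_commute: "hs_inner B A = cnj (hs_inner A B)"
  by (simp add: hs_inner_entrywise mult.commute)

lemma hs_inner_munit_left: "hs_inner (munit a b) X = X $ a $ b"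
  by (simp add: hs_inner_entrywise if_zero_simps cong del: if_weak_cong)

lemma hs_inner_matrix_mult_right: "hs_inner Z (c ** Y) = hs_inner (madj c ** Z) Y"
proof -
  have "hs_inner Z (c ** Y) = (\<Sum>i\<in>UNIV. \<Sum>j\<in>UNIV. \<Sum>k\<in>UNIV. cnj (Z$i$j) * c$i$k * Y$k$j)"
    by (simp add: hs_inner_entrywise matrix_mult_nth sum_distrib_left mult.assoc)
  also have "\<dots> = (\<Sum>k\<in>UNIV. \<Sum>j\<in>UNIV. \<Sum>i\<in>UNIV. cnj (Z$i$j) * c$i$k * Y$k$j)"
    by (subst sum_rotate3) (rule sum.swap)
  also have "\<dots> = hs_inner (madj c ** Z) Y"
    by (simp add: hs_inner_entrywise matrix_mult_nth cnj_sum sum_distrib_left mult_ac)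
  finally show ?thesis .
qed

text \<open>This identity lets the orthogonal projection be obtained from the real projection theorem.\<close>

lemma Re_hs_inner: "Re (hs_inner A B) = inner A B"
  by (simp add: hs_inner_entrywise inner_vec_def inner_complex_def Re_sum)

lemma hs_inner_self_eq_0: "hs_inner A A = 0 \<Longrightarrow> A = 0"
  by (metis Re_hs_inner inner_eq_zero_iff zero_complex.simps(1))

subsection \<open>Complex subspaces and orthogonal projections\<close>

lemma csubspace_0: "csubspace V \<Longrightarrow> 0 \<in> V"
  by (simp add: csubspace_def)

lemma csubspace_add: "csubspace V \<Longrightarrow> x \<in> V \<Longrightarrow> y \<in> V \<Longrightarrow> x + y \<in> V"
  by (simp add: csubspace_def)

lemma csubspace_msc: "csubspace V \<Longrightarrow> x \<in> V \<Longrightarrow> msc c x \<in> V"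
  by (simp add: csubspace_def)

lemma csubspace_diff: "csubspace V \<Longrightarrow> x \<in> V \<Longrightarrow> y \<in> V \<Longrightarrow> x - y \<in> V"
proof -
  assume V: "csubspace V" and "x \<in> V" "y \<in> V"
  then have "x + msc (-1) y \<in> V" by (simp add: csubspace_add csubspace_msc)
  moreover have "x + msc (-1) y = x - y" by (simp add: vec_eq_iff)
  ultimately show ?thesis by simp
qed

lemma csubspace_sum: "csubspace V \<Longrightarrow> (\<And>i. i \<in> S \<Longrightarrow> f i \<in> V) \<Longrightarrow> sum f S \<in> V"
  by (induction S rule: infinite_finite_induct) (simp_all add: csubspace_0 csubspace_add)

lemma csubspace_Inter: "(\<And>T. T \<in> F \<Longrightarrow> csubspace T) \<Longrightarrow> csubspace (\<Inter>F)"
  unfolding csubspace_def by blast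

lemma csubspace_cspan: "csubspace (cspan S)"
  unfolding cspan_def by (rule csubspace_Inter) blast

lemma cspan_superset: "x \<in> S \<Longrightarrow> x \<in> cspan S"
  unfolding cspan_def by blast

lemma csubspace_alg_tensor: "csubspace (alg_tensor A B)"
  unfolding alg_tensor_def by (rule csubspace_cspan)

lemma kron_in_alg_tensor: "x \<in> A \<Longrightarrow> y \<in> B \<Longrightarrow> kron x y \<in> alg_tensor A B"
  unfolding alg_tensor_def by (rule cspan_superset) blast

lemma csubspace_imp_subspace: "csubspace V \<Longrightarrow> subspace (V :: (complex^'i^'j) set)"
proof -
  have "scaleR r A = msc (complex_of_real r) A" for r and A :: "complex^'i^'j"
    by (simp add: vec_eq_iff) (simp add: scaleR_conv_of_real)
  then show "csubspace V \<Longrightarrow> subspace V"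
    unfolding subspace_def by (simp add: csubspace_0 csubspace_add csubspace_msc)
qed

lemma orth_proj_exists:
  assumes V: "csubspace (V::(complex^'i^'i) set)"
  shows "\<exists>Y\<in>V. \<forall>Z\<in>V. hs_inner Z (X - Y) = 0"
proof -
  have span: "span V = V"
    using csubspace_imp_subspace[OF V] by (simp add: span_eq_iff)
  obtain Y R where "Y \<in> V" and R: "\<And>Z. Z \<in> V \<Longrightarrow> orthogonal R Z" and "X = Y + R"
    using orthogonal_subspace_decomp_exists[of V X] unfolding span by blast
  have "hs_inner Z R = 0" if "Z \<in> V" for Z
  proof -
    \<comment> \<open>real orthogonality to the complex subspace also gives orthogonality to \<open>\<i> Z\<close>\<close>
    have "msc \<i> Z \<in> V" using V that by (rule csubspace_msc)
    then have "orthogonal R Z" "orthogonal R (msc \<i> Z)" using R that by blast+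
    then have "Re (hs_inner Z R) = 0" "Re (hs_inner (msc \<i> Z) R) = 0"
      by (simp_all add: Re_hs_inner orthogonal_def inner_commute)
    then show ?thesis by (simp add: hs_inner_msc_left complex_eq_iff)
  qed
  with \<open>Y \<in> V\<close> \<open>X = Y + R\<close> show ?thesis by (metis add_diff_cancel_left')
qed

lemma orth_proj_unique:
  assumes V: "csubspace V"
    and "Y1 \<in> V" "\<forall>Z\<in>V. hs_inner Z (X - Y1) = 0"
    and "Y2 \<in> V" "\<forall>Z\<in>V. hs_inner Z (X - Y2) = 0"
  shows "Y1 = Y2"
proof -
  have "Y1 - Y2 \<in> V" using assms csubspace_diff by blast
  with assms have "hs_inner (Y1 - Y2) (X - Y2) - hs_inner (Y1 - Y2) (X - Y1) = 0" by simp
  then have "hs_inner (Y1 - Y2) (Y1 - Y2) = 0" by (simp add: hs_inner_diff_right)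
  then show ?thesis using hs_inner_self_eq_0 by fastforce
qed

lemma orth_proj_char:
  assumes "csubspace V"
  shows "orth_proj V X \<in> V \<and> (\<forall>Z\<in>V. hs_inner Z (X - orth_proj V X) = 0)"
  unfolding orth_proj_def
  by (rule theI') (use orth_proj_exists[OF assms] orth_proj_unique[OF assms] in metis)

lemma orth_proj_in: "csubspace V \<Longrightarrow> orth_proj V X \<in> V"
  using orth_proj_char by blast

lemma orth_proj_orthogonal: "csubspace V \<Longrightarrow> Z \<in> V \<Longrightarrow> hs_inner Z (X - orth_proj V X) = 0"
  using orth_proj_char by blast

lemma orth_proj_eqI:
  assumes "csubspace V" "Y \<in> V" "\<And>Z. Z \<in> V \<Longrightarrow> hs_inner Z (X - Y) = 0"
  shows "orth_proj V X = Y"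
  using orth_proj_unique[OF assms(1) _ _ assms(2)] orth_proj_char[OF assms(1)] assms(3) by blast

lemma orth_proj_fixed: "csubspace V \<Longrightarrow> Y \<in> V \<Longrightarrow> orth_proj V Y = Y"
  by (rule orth_proj_eqI) (simp_all add: hs_inner_zero_right)

lemma orth_proj_idem: "csubspace V \<Longrightarrow> orth_proj V (orth_proj V X) = orth_proj V X"
  by (simp add: orth_proj_fixed orth_proj_in)

lemma orth_proj_add: "csubspace V \<Longrightarrow> orth_proj V (X + Y) = orth_proj V X + orth_proj V Y"
proof (rule orth_proj_eqI)
  assume V: "csubspace V"
  show "orth_proj V X + orth_proj V Y \<in> V" by (simp add: V csubspace_add orth_proj_in)
  show "hs_inner Z (X + Y - (orth_proj V X + orth_proj V Y)) = 0" if "Z \<in> V" for Z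
    by (simp only: add_diff_add hs_inner_add_right orth_proj_orthogonal[OF V that] add_0)
qed

lemma orth_proj_msc: "csubspace V \<Longrightarrow> orth_proj V (msc c X) = msc c (orth_proj V X)"
proof (rule orth_proj_eqI)
  assume V: "csubspace V"
  show "msc c (orth_proj V X) \<in> V" by (simp add: V csubspace_msc orth_proj_in)
  have "msc c X - msc c (orth_proj V X) = msc c (X - orth_proj V X)"
    by (simp add: vec_eq_iff algebra_simps)
  then show "hs_inner Z (msc c X - msc c (orth_proj V X)) = 0" if "Z \<in> V" for Z
    by (simp add: hs_inner_msc_right orth_proj_orthogonal V that)
qed

lemma orth_proj_sum: "csubspace V \<Longrightarrow> orth_proj V (sum f S) = (\<Sum>i\<in>S. orth_proj V (f i))"
  by (induction S rule: infinite_finite_induct)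
    (simp_all add: orth_proj_fixed csubspace_0 orth_proj_add)

lemma orth_proj_nth:
  assumes V: "csubspace V"
  shows "orth_proj V X $ a $ b = (\<Sum>c\<in>UNIV. \<Sum>d\<in>UNIV. X $ c $ d * orth_proj V (munit c d) $ a $ b)"
proof -
  have "orth_proj V X = orth_proj V (\<Sum>c\<in>UNIV. \<Sum>d\<in>UNIV. msc (X $ c $ d) (munit c d))"
    using matrix_eq_sum_munit[of X] by simp
  also have "\<dots> = (\<Sum>c\<in>UNIV. \<Sum>d\<in>UNIV. msc (X $ c $ d) (orth_proj V (munit c d)))"
    by (simp add: V orth_proj_sum orth_proj_msc)
  finally show ?thesis by (simp add: sum_component)
qed

lemma hs_inner_orth_proj_right:
  assumes V: "csubspace V"
  shows "hs_inner X (orth_proj V Y) = hs_inner (orth_proj V X) (orth_proj V Y)"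
proof -
  have "hs_inner (orth_proj V Y) (X - orth_proj V X) = 0"
    by (simp add: V orth_proj_in orth_proj_orthogonal)
  then have "hs_inner (X - orth_proj V X) (orth_proj V Y) = 0"
    by (metis complex_cnj_zero hs_inner_cnj_commute)
  then show ?thesis by (simp add: hs_inner_diff_left)
qed

lemma hs_inner_orth_proj_right_mem:
  "csubspace V \<Longrightarrow> K \<in> V \<Longrightarrow> hs_inner K (orth_proj V X) = hs_inner K X"
  using orth_proj_orthogonal[of V K X] by (simp add: hs_inner_diff_right)

lemma hs_inner_orth_proj_left_mem:
  "csubspace V \<Longrightarrow> K \<in> V \<Longrightarrow> hs_inner (orth_proj V X) K = hs_inner X K"
  by (metis hs_inner_cnj_commute hs_inner_orth_proj_right_mem)

lemma orth_proj_munit_gram: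
  "csubspace V \<Longrightarrow>
    orth_proj V (munit c d) $ a $ b = hs_inner (orth_proj V (munit a b)) (orth_proj V (munit c d))"
  by (metis hs_inner_munit_left hs_inner_orth_proj_right)

lemma orth_proj_matrix_mult_left:
  assumes V: "csubspace V" and c: "\<forall>X\<in>V. c ** X \<in> V" and c_adj: "\<forall>X\<in>V. madj c ** X \<in> V"
  shows "orth_proj V (c ** X) = c ** orth_proj V X"
proof (rule orth_proj_eqI[OF V])
  show "c ** orth_proj V X \<in> V" using c orth_proj_in[OF V] by blast
  have "c ** X - c ** orth_proj V X = c ** (X - orth_proj V X)"
    by (simp add: vec_eq_iff matrix_mult_nth algebra_simps sum_subtractf)
  then show "hs_inner Z (c ** X - c ** orth_proj V X) = 0" if "Z \<in> V" for Z
    using c_adj that by (simp add: hs_inner_matrix_mult_right orth_proj_orthogonal[OF V])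
qed

subsection \<open>Complete positivity\<close>

lemma cinner_sum_right: "cinner u (sum f S) = (\<Sum>x\<in>S. cinner u (f x))"
  by (simp add: cinner_def sum_component sum_distrib_left) (rule sum.swap)

lemma matrix_sum_vector_mult: "sum f S *v x = (\<Sum>i\<in>S. f i *v x)"
  by (induction S rule: infinite_finite_induct) (simp_all add: matrix_vector_mult_add_rdistrib)

lemma cinner_madj_right: "cinner u (madj K *v w) = cinner (K *v u) w"
  by (simp add: cinner_def matrix_vector_mult_def sum_distrib_left sum_distrib_right mult_ac cnj_sum)
    (rule sum.swap)

lemma cp_on_kraus:
  fixes K :: "'r::finite \<Rightarrow> complex^'i::finite^'i"
  shows "cp_on A (\<lambda>X. \<Sum>\<rho>\<in>UNIV. madj (K \<rho>) ** X ** K \<rho>)"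
  unfolding cp_on_def block_pos_def
proof (intro allI impI)
  fix r a and v :: "nat \<Rightarrow> complex^'i"
  assume pos: "\<forall>v :: nat \<Rightarrow> complex^'i. Im (\<Sum>i<r. \<Sum>j<r. cinner (v i) (a i j *v v j)) = 0
      \<and> 0 \<le> Re (\<Sum>i<r. \<Sum>j<r. cinner (v i) (a i j *v v j))"
  have kraus_terms: "cinner (v i) ((\<Sum>\<rho>\<in>UNIV. madj (K \<rho>) ** a i j ** K \<rho>) *v v j)
      = (\<Sum>\<rho>\<in>UNIV. cinner (K \<rho> *v v i) (a i j *v (K \<rho> *v v j)))" for i j
    by (simp add: matrix_sum_vector_mult cinner_sum_right cinner_madj_right
        flip: matrix_vector_mul_assoc)
  have "(\<Sum>i<r. \<Sum>j<r. cinner (v i) ((\<Sum>\<rho>\<in>UNIV. madj (K \<rho>) ** a i j ** K \<rho>) *v v j))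
      = (\<Sum>\<rho>\<in>UNIV. \<Sum>i<r. \<Sum>j<r. cinner (K \<rho> *v v i) (a i j *v (K \<rho> *v v j)))"
    unfolding kraus_terms by (rule sum_rotate3[symmetric])
  then show "Im (\<Sum>i<r. \<Sum>j<r. cinner (v i) ((\<Sum>\<rho>\<in>UNIV. madj (K \<rho>) ** a i j ** K \<rho>) *v v j)) = 0
      \<and> 0 \<le> Re (\<Sum>i<r. \<Sum>j<r. cinner (v i) ((\<Sum>\<rho>\<in>UNIV. madj (K \<rho>) ** a i j ** K \<rho>) *v v j))"
    using pos by (simp add: Im_sum Re_sum sum_nonneg)
qed

lemma cp_on_gram_kernel:
  fixes G :: "'i::finite \<Rightarrow> 'i \<Rightarrow> complex^'j::finite^'j"
  assumes \<Phi>: "\<And>X s t. \<Phi> X $ s $ t = (\<Sum>u\<in>UNIV. \<Sum>w\<in>UNIV. hs_inner (G u t) (G w s) * X $ w $ u)"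
  shows "cp_on A \<Phi>"
proof -
  define K where "K \<rho> = (\<chi> u t. cnj (G u t $ fst \<rho> $ snd \<rho>))" for \<rho> :: "'j \<times> 'j"
  have "\<Phi> X $ s $ t = (\<Sum>\<rho>\<in>UNIV. madj (K \<rho>) ** X ** K \<rho>) $ s $ t" for X s t
  proof -
    have "\<Phi> X $ s $ t = (\<Sum>u\<in>UNIV. \<Sum>w\<in>UNIV. \<Sum>\<rho>\<in>UNIV.
        G w s $ fst \<rho> $ snd \<rho> * X $ w $ u * cnj (G u t $ fst \<rho> $ snd \<rho>))"
      by (simp add: \<Phi> hs_inner_entrywise sum_UNIV_prod sum_distrib_left mult_ac)
    also have "\<dots> = (\<Sum>\<rho>\<in>UNIV. \<Sum>u\<in>UNIV. \<Sum>w\<in>UNIV.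
        G w s $ fst \<rho> $ snd \<rho> * X $ w $ u * cnj (G u t $ fst \<rho> $ snd \<rho>))"
      by (rule sum_rotate3[symmetric])
    also have "\<dots> = (\<Sum>\<rho>\<in>UNIV. madj (K \<rho>) ** X ** K \<rho>) $ s $ t"
      by (simp add: K_def sum_component matrix_mult_nth sum_distrib_right)
    finally show ?thesis .
  qed
  then have "\<Phi> = (\<lambda>X. \<Sum>\<rho>\<in>UNIV. madj (K \<rho>) ** X ** K \<rho>)"
    by (simp add: vec_eq_iff fun_eq_iff)
  then show ?thesis by (simp add: cp_on_kraus)
qed

text \<open>The adjacency operator \<open>(tr \<otimes> id) (P (X \<otimes> 1))\<close> of the projection \<open>P\<close> onto a subspace
  \<open>V \<subseteq> B(H)\<close>, written out in matrix coordinates.\<close>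

definition adjacency_op :: "(complex^'i^'i) set \<Rightarrow> complex^'i^'i \<Rightarrow> complex^'i::finite^'i" where
  "adjacency_op V X = (\<chi> s t. \<Sum>u\<in>UNIV. \<Sum>w\<in>UNIV. orth_proj V (munit w s) $ u $ t * X $ w $ u)"

lemma cp_on_adjacency_op: "csubspace V \<Longrightarrow> cp_on A (adjacency_op V)"
  by (rule cp_on_gram_kernel[where G = "\<lambda>w s. orth_proj V (munit w s)"])
    (simp add: adjacency_op_def orth_proj_munit_gram)

lemma pi4_munit: "pi4 T (munit (b, f) (c, g)) $ (a, e) $ (d, h) = T $ (a, c, e, g) $ (b, d, f, h)"
  by (simp add: pi4_def if_zero_simps cong del: if_weak_cong)

lemma P_V_eq:
  assumes V: "csubspace V"
  shows "P_V V = vec_lambda (\<lambda>(a, c, e, g). vec_lambda (\<lambda>(b, d, f, h).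
            orth_proj V (munit (b, f) (c, g)) $ (a, e) $ (d, h)))" (is "_ = ?T")
  unfolding P_V_def
proof (rule the_equality)
  show "pi4 ?T = orth_proj V"
  proof (rule ext)
    fix S
    have "pi4 ?T S $ (a, e) $ (d, h) = orth_proj V S $ (a, e) $ (d, h)" for a e d h
    proof -
      have "pi4 ?T S $ (a, e) $ (d, h) = (\<Sum>b\<in>UNIV. \<Sum>f\<in>UNIV. \<Sum>c\<in>UNIV. \<Sum>g\<in>UNIV.
          S $ (b, f) $ (c, g) * orth_proj V (munit (b, f) (c, g)) $ (a, e) $ (d, h))"
        by (simp add: pi4_def, rule sum.cong[OF refl], subst sum.swap) (simp add: mult.commute)
      also have "\<dots> = orth_proj V S $ (a, e) $ (d, h)"
        by (subst orth_proj_nth[OF V, of S]) (simp add: sum_UNIV_prod)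
      finally show ?thesis .
    qed
    then show "pi4 ?T S = orth_proj V S" by (simp add: vec_eq_iff split_paired_All)
  qed
next
  fix T assume "pi4 T = orth_proj V"
  then show "T = ?T"
    using pi4_munit[of T] by (simp add: vec_eq_iff split_paired_All)
qed

lemma ptr13_mult4_emb4:
  "ptr13 (mult4 T (emb4 X)) $ (c, g) $ (d, h)
    = (\<Sum>a\<in>UNIV. \<Sum>e\<in>UNIV. \<Sum>x\<in>UNIV. \<Sum>z\<in>UNIV. T $ (a, c, e, g) $ (x, d, z, h) * X $ (x, z) $ (a, e))"
  by (simp add: ptr13_def mult4_def emb4_def if_zero_simps cong del: if_weak_cong)

lemma A_PV_eq_adjacency_op: "csubspace V \<Longrightarrow> A_PV V = adjacency_op V"
  by (simp add: fun_eq_iff vec_eq_iff A_PV_def adjacency_op_def ptr13_mult4_emb4 P_V_eq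
      sum_UNIV_prod)

lemma pi2_munit: "pi2 T (munit b c) $ a $ d = T $ (a, c) $ (b, d)"
  by (simp add: pi2_def if_zero_simps cong del: if_weak_cong)

lemma pi2_preimage_orth_proj:
  assumes V: "csubspace V"
  shows "(THE T. pi2 T = orth_proj V)
    = vec_lambda (\<lambda>(a, c). vec_lambda (\<lambda>(b, d). orth_proj V (munit b c) $ a $ d))" (is "_ = ?T")
proof (rule the_equality)
  have "pi2 ?T S $ a $ d = orth_proj V S $ a $ d" for S a d
    by (subst orth_proj_nth[OF V, of S]) (simp add: pi2_def mult.commute)
  then show "pi2 ?T = orth_proj V" by (simp add: fun_eq_iff vec_eq_iff)
next
  fix T assume "pi2 T = orth_proj V"
  then show "T = ?T"
    using pi2_munit[of T] by (simp add: vec_eq_iff split_paired_All)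
qed

lemma ptr1_mult2_emb2:
  "ptr1 (mult2 T (emb2 X)) $ c $ d = (\<Sum>a\<in>UNIV. \<Sum>x\<in>UNIV. T $ (a, c) $ (x, d) * X $ x $ a)"
  by (simp add: ptr1_def mult2_def emb2_def if_zero_simps cong del: if_weak_cong)

lemma csubspace_V_tilde:
  assumes V: "csubspace V"
  shows "csubspace (V_tilde V)"
  unfolding csubspace_def V_tilde_def
proof (intro conjI ballI allI)
  have "ptrK 0 = 0" by (simp add: vec_eq_iff ptrK_def)
  then show "0 \<in> ptrK ` V" using csubspace_0[OF V] by (metis image_eqI)
next
  fix x y assume "x \<in> ptrK ` V" "y \<in> ptrK ` V"
  then obtain X Y where "X \<in> V" "Y \<in> V" "x = ptrK X" "y = ptrK Y" by blast
  moreover have "ptrK (X + Y) = ptrK X + ptrK Y" by (simp add: vec_eq_iff ptrK_def sum.distrib)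
  ultimately show "x + y \<in> ptrK ` V" using csubspace_add[OF V] by (metis image_eqI)
next
  fix c x assume "x \<in> ptrK ` V"
  then obtain X where "X \<in> V" "x = ptrK X" by blast
  moreover have "ptrK (msc c X) = msc c (ptrK X)" by (simp add: vec_eq_iff ptrK_def sum_distrib_left)
  ultimately show "msc c x \<in> ptrK ` V" using csubspace_msc[OF V] by (metis image_eqI)
qed

lemma A_PVt_eq_adjacency_op:
  assumes "csubspace V"
  shows "A_PVt V = adjacency_op (V_tilde V)"
proof -
  have "A_PVt V X $ s $ t = adjacency_op (V_tilde V) X $ s $ t" for X s t
    unfolding A_PVt_def P_Vt_def pi2_preimage_orth_proj[OF csubspace_V_tilde[OF assms]]
      ptr1_mult2_emb2
    by (simp add: adjacency_op_def)
  then show ?thesis by (simp add: fun_eq_iff vec_eq_iff)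
qed

lemma kron_munit_mat_one: "kron (munit w s) (mat 1) = (\<Sum>f\<in>UNIV. munit (w, f) (s, f))"
  by (simp add: vec_eq_iff split_paired_All sum_component mat_one_nth if_zero_simps
      cong del: if_weak_cong)

lemma hs_inner_kron_munit_mat_one:
  "hs_inner (kron (munit u t) (mat 1)) Y = (\<Sum>e\<in>UNIV. Y $ (u, e) $ (t, e))"
  by (simp add: hs_inner_entrywise sum_UNIV_prod mat_one_nth if_zero_simps
      cong del: if_weak_cong)

lemma S_V_gram:
  assumes V: "csubspace V"
  shows "S_V V $ (u, s) $ (w, t) = hs_inner (orth_proj V (kron (munit u t) (mat 1)))
      (orth_proj V (kron (munit w s) (mat 1)))"
proof -
  have "S_V V $ (u, s) $ (w, t) = (\<Sum>e\<in>UNIV. orth_proj V (kron (munit w s) (mat 1)) $ (u, e) $ (t, e))"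
    by (simp add: S_V_def ptr3_def id_id_mult_def P_V_eq[OF V] kron_munit_mat_one
        orth_proj_sum[OF V] sum_component)
  also have "\<dots> = hs_inner (kron (munit u t) (mat 1)) (orth_proj V (kron (munit w s) (mat 1)))"
    by (simp add: hs_inner_kron_munit_mat_one)
  also have "\<dots> = hs_inner (orth_proj V (kron (munit u t) (mat 1)))
      (orth_proj V (kron (munit w s) (mat 1)))"
    by (rule hs_inner_orth_proj_right[OF V])
  finally show ?thesis .
qed

lemma cp_on_A_SV: "csubspace V \<Longrightarrow> cp_on A (A_SV V)"
  by (rule cp_on_gram_kernel[where G = "\<lambda>w s. orth_proj V (kron (munit w s) (mat 1))"])
    (simp add: A_SV_def ptr1_mult2_emb2 S_V_gram)

subsection \<open>Schur idempotency\<close>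

definition mstar_full :: "complex^'i^'i \<Rightarrow> complex^('i::finite \<times> 'i)^('i \<times> 'i)" where
  "mstar_full z = vec_lambda (\<lambda>(i, k). vec_lambda (\<lambda>(j, l). if j = k then z $ i $ l else 0))"

lemma mstar_full_nth: "mstar_full z $ (i, k) $ (j, l) = (if j = k then z $ i $ l else 0)"
  by (simp add: mstar_full_def)

lemma hs_inner_mstar_full: "hs_inner (mstar_full z) u = hs_inner z (mmult u)"
proof -
  have "hs_inner (mstar_full z) u = (\<Sum>i\<in>UNIV. \<Sum>k\<in>UNIV. \<Sum>l\<in>UNIV. cnj (z $ i $ l) * u $ (i, k) $ (k, l))"
    by (simp add: hs_inner_entrywise sum_UNIV_prod mstar_full_nth if_zero_simps
        cong del: if_weak_cong)
  also have "\<dots> = (\<Sum>i\<in>UNIV. \<Sum>l\<in>UNIV. \<Sum>k\<in>UNIV. cnj (z $ i $ l) * u $ (i, k) $ (k, l))"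
    by (rule sum.cong[OF refl], rule sum.swap)
  also have "\<dots> = hs_inner z (mmult u)"
    by (simp add: hs_inner_entrywise mmult_nth sum_distrib_left)
  finally show ?thesis .
qed

lemma mstar_eq_orth_proj: "mstar A z = orth_proj (alg_tensor A A) (mstar_full z)"
  unfolding mstar_def
proof (rule the_equality)
  let ?AA = "alg_tensor A A" and ?w = "orth_proj (alg_tensor A A) (mstar_full z)"
  have AA: "csubspace ?AA" by (rule csubspace_alg_tensor)
  show "?w \<in> ?AA \<and> (\<forall>u\<in>?AA. hs_inner ?w u = hs_inner z (mmult u))"
    by (simp add: AA orth_proj_in hs_inner_orth_proj_left_mem hs_inner_mstar_full)
  fix w assume w: "w \<in> ?AA \<and> (\<forall>u\<in>?AA. hs_inner w u = hs_inner z (mmult u))"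
  then have "w - ?w \<in> ?AA" by (simp add: AA csubspace_diff orth_proj_in)
  with w have "hs_inner (w - ?w) (w - ?w) = 0"
    by (simp add: AA hs_inner_diff_left hs_inner_orth_proj_left_mem hs_inner_mstar_full)
  then show "w = ?w" using hs_inner_self_eq_0 by fastforce
qed

text \<open>The entries of \<open>\<Phi> \<otimes> \<Phi>\<close> are inner products with elementary tensors of these
  matrices; when they lie in \<open>A\<close>, \<open>\<Phi> \<otimes> \<Phi>\<close> cannot distinguish \<open>m\<^sup>*\<close> on \<open>A\<close> from \<open>m\<^sup>*\<close>
  on all of \<open>B(H)\<close>.\<close>

definition dual_slice ::
    "(complex^'i^'i \<Rightarrow> complex^'i^'i) \<Rightarrow> 'i \<Rightarrow> 'i \<Rightarrow> complex^'i::finite^'i" where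
  "dual_slice \<Phi> a b = (\<chi> p q. cnj (\<Phi> (munit p q) $ a $ b))"

lemma tmap_nth_hs_inner:
  "tmap \<Phi> W $ (a, a') $ (b, b') = hs_inner (kron (dual_slice \<Phi> a b) (dual_slice \<Phi> a' b')) W"
proof -
  have "tmap \<Phi> W $ (a, a') $ (b, b') = (\<Sum>p\<in>UNIV. \<Sum>q\<in>UNIV. \<Sum>r\<in>UNIV. \<Sum>s\<in>UNIV.
      W $ (p, r) $ (q, s) * (\<Phi> (munit p q) $ a $ b * \<Phi> (munit r s) $ a' $ b'))"
    by (simp add: tmap_def sum_component)
  also have "\<dots> = (\<Sum>p\<in>UNIV. \<Sum>r\<in>UNIV. \<Sum>q\<in>UNIV. \<Sum>s\<in>UNIV.
      W $ (p, r) $ (q, s) * (\<Phi> (munit p q) $ a $ b * \<Phi> (munit r s) $ a' $ b'))"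
    by (rule sum.cong[OF refl], rule sum.swap)
  also have "\<dots> = hs_inner (kron (dual_slice \<Phi> a b) (dual_slice \<Phi> a' b')) W"
    by (simp add: hs_inner_entrywise sum_UNIV_prod dual_slice_def mult_ac)
  finally show ?thesis .
qed

lemma schur_idempotentI:
  assumes full: "\<And>z. mmult (tmap \<Phi> (mstar_full z)) = \<Phi> z"
    and slices: "\<And>a b. dual_slice \<Phi> a b \<in> A"
  shows "schur_idempotent A \<Phi>"
  unfolding schur_idempotent_def
proof
  fix z
  have "tmap \<Phi> (mstar A z) $ (a, a') $ (b, b') = tmap \<Phi> (mstar_full z) $ (a, a') $ (b, b')"
    for a a' b b'
    by (simp add: tmap_nth_hs_inner mstar_eq_orth_proj hs_inner_orth_proj_right_mem
        csubspace_alg_tensor kron_in_alg_tensor slices)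
  then have "tmap \<Phi> (mstar A z) = tmap \<Phi> (mstar_full z)"
    by (simp add: vec_eq_iff split_paired_All)
  then show "mmult (tmap \<Phi> (mstar A z)) = \<Phi> z" by (simp add: full)
qed

lemma adjacency_op_munit: "adjacency_op V (munit p q) $ a $ b = orth_proj V (munit p a) $ q $ b"
  by (simp add: adjacency_op_def if_zero_simps cong del: if_weak_cong)

lemma adjacency_op_schur_full:
  assumes V: "csubspace V"
  shows "mmult (tmap (adjacency_op V) (mstar_full z)) = adjacency_op V z"
proof -
  let ?P = "\<lambda>p i. orth_proj V (munit p i)"
  have "mmult (tmap (adjacency_op V) (mstar_full z)) $ i $ j = adjacency_op V z $ i $ j" for i j
  proof -
    have "mmult (tmap (adjacency_op V) (mstar_full z)) $ i $ j
        = (\<Sum>k\<in>UNIV. \<Sum>p\<in>UNIV. \<Sum>q\<in>UNIV. \<Sum>s\<in>UNIV. z $ p $ s * (?P p i $ q $ k * ?P q k $ s $ j))"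
      by (simp add: mmult_nth tmap_def sum_component adjacency_op_munit mstar_full_nth
          if_zero_simps cong del: if_weak_cong)
    also have "\<dots> = (\<Sum>p\<in>UNIV. \<Sum>s\<in>UNIV.
        z $ p $ s * (\<Sum>q\<in>UNIV. \<Sum>k\<in>UNIV. ?P p i $ q $ k * ?P q k $ s $ j))"
      by (subst sum_rotate4, rule sum.cong[OF refl], subst sum.swap) (simp add: sum_distrib_left)
    also have "\<dots> = (\<Sum>p\<in>UNIV. \<Sum>s\<in>UNIV. z $ p $ s * ?P p i $ s $ j)"
    proof -
      have "(\<Sum>q\<in>UNIV. \<Sum>k\<in>UNIV. ?P p i $ q $ k * ?P q k $ s $ j) = ?P p i $ s $ j" for p s
        using orth_proj_nth[OF V, of "?P p i" s j] by (simp add: orth_proj_idem[OF V])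
      then show ?thesis by simp
    qed
    also have "\<dots> = adjacency_op V z $ i $ j"
      unfolding adjacency_op_def by (subst sum.swap) (simp add: mult.commute)
    finally show ?thesis .
  qed
  then show ?thesis by (simp add: vec_eq_iff)
qed

definition proj_slice :: "(complex^'i^'i) set \<Rightarrow> 'i \<Rightarrow> 'i \<Rightarrow> complex^'i::finite^'i" where
  "proj_slice V a b = (\<chi> u w. orth_proj V (munit w a) $ u $ b)"

lemma dual_slice_adjacency_op: "dual_slice (adjacency_op V) a b = madj (proj_slice V a b)"
  by (simp add: vec_eq_iff dual_slice_def proj_slice_def adjacency_op_munit)

lemma schur_idempotent_adjacency_op:
  "csubspace V \<Longrightarrow> (\<And>a b. madj (proj_slice V a b) \<in> A) \<Longrightarrow> schur_idempotent A (adjacency_op V)"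
  by (rule schur_idempotentI) (simp_all add: adjacency_op_schur_full dual_slice_adjacency_op)

lemma proj_slice_commute:
  assumes V: "csubspace V" and c: "\<And>X. orth_proj V (c ** X) = c ** orth_proj V X"
  shows "c ** proj_slice V a b = proj_slice V a b ** c"
proof -
  have "(\<Sum>x\<in>UNIV. c $ u $ x * orth_proj V (munit w a) $ x $ b)
      = (\<Sum>x\<in>UNIV. orth_proj V (munit x a) $ u $ b * c $ x $ w)" for u w
  proof -
    have "(\<Sum>x\<in>UNIV. c $ u $ x * orth_proj V (munit w a) $ x $ b) = orth_proj V (c ** munit w a) $ u $ b"
      by (simp add: c matrix_mult_nth)
    also have "\<dots> = (\<Sum>x\<in>UNIV. orth_proj V (munit x a) $ u $ b * c $ x $ w)"
      by (subst orth_proj_nth[OF V])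
        (simp add: matrix_mult_nth if_zero_simps mult.commute cong del: if_weak_cong)
    finally show ?thesis .
  qed
  then have "(c ** proj_slice V a b) $ u $ w = (proj_slice V a b ** c) $ u $ w" for u w
    by (simp only: matrix_mult_nth proj_slice_def vec_lambda_beta)
  then show ?thesis by (simp add: vec_eq_iff)
qed

lemma madj_commute: "c ** R = R ** c \<Longrightarrow> madj c ** R = R ** madj c \<Longrightarrow> c ** madj R = madj R ** c"
  by (metis madj_madj madj_mult)

lemma madj_proj_slice_commute:
  assumes V: "csubspace V" and c: "\<forall>X\<in>V. c ** X \<in> V" and c_adj: "\<forall>X\<in>V. madj c ** X \<in> V"
  shows "c ** madj (proj_slice V a b) = madj (proj_slice V a b) ** c"
proof (rule madj_commute)
  show "c ** proj_slice V a b = proj_slice V a b ** c"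
    by (rule proj_slice_commute[OF V orth_proj_matrix_mult_left[OF V c c_adj]])
  show "madj c ** proj_slice V a b = proj_slice V a b ** madj c"
    by (rule proj_slice_commute[OF V orth_proj_matrix_mult_left[OF V c_adj]]) (simp add: c)
qed

subsection \<open>Double commutants\<close>

lemma commutant_madj:
  assumes M: "fd_vNa M" and a: "a \<in> commutant M"
  shows "madj a \<in> commutant M"
proof -
  have "madj a ** x = x ** madj a" if "x \<in> M" for x
  proof -
    have "madj x \<in> M" using M that unfolding fd_vNa_def by blast
    then have "a ** madj x = madj x ** a" using a unfolding commutant_def by blast
    then show ?thesis by (metis madj_madj madj_mult)
  qed
  then show ?thesis unfolding commutant_def by blast
qed

text \<open>The slices of the projection onto a von Neumann algebra lie in its commutant, and they
  are rich enough to reconstruct the projection of an element commuting with all of them.\<close>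

lemma fd_vNa_bicommutant:
  assumes A: "fd_vNa A" and x: "x \<in> commutant (commutant A)"
  shows "x \<in> A"
proof -
  have S: "csubspace A" using A by (simp add: fd_vNa_def)
  let ?Q = "orth_proj A"
  have "proj_slice A d b \<in> commutant A" for d b
  proof -
    have "y ** proj_slice A d b = proj_slice A d b ** y" if "y \<in> A" for y
    proof (rule proj_slice_commute[OF S orth_proj_matrix_mult_left[OF S]])
      show "\<forall>X\<in>A. y ** X \<in> A" "\<forall>X\<in>A. madj y ** X \<in> A"
        using A that unfolding fd_vNa_def by blast+
    qed
    then show ?thesis unfolding commutant_def by auto
  qed
  then have x_slice: "x ** proj_slice A d b = proj_slice A d b ** x" for d b
    using x unfolding commutant_def by blast
  have unit_sum: "?Q (mat 1) $ y $ b = (\<Sum>d\<in>UNIV. ?Q (munit d d) $ y $ b)" for y b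
    by (subst orth_proj_nth[OF S]) (simp add: mat_one_nth if_zero_simps cong del: if_weak_cong)
  have "?Q x $ a $ b = x $ a $ b" for a b
  proof -
    have "?Q x $ a $ b = (\<Sum>d\<in>UNIV. \<Sum>c\<in>UNIV. proj_slice A d b $ a $ c * x $ c $ d)"
      by (subst orth_proj_nth[OF S], subst sum.swap) (simp add: proj_slice_def mult.commute)
    also have "\<dots> = (\<Sum>d\<in>UNIV. (x ** proj_slice A d b) $ a $ d)"
      by (simp add: x_slice flip: matrix_mult_nth)
    also have "\<dots> = (\<Sum>y\<in>UNIV. x $ a $ y * (\<Sum>d\<in>UNIV. ?Q (munit d d) $ y $ b))"
      by (simp add: matrix_mult_nth proj_slice_def sum_distrib_left) (rule sum.swap)
    also have "\<dots> = x $ a $ b"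
      using A by (simp add: fd_vNa_def orth_proj_fixed[OF S] mat_one_nth if_zero_simps
          flip: unit_sum cong del: if_weak_cong)
    finally show ?thesis .
  qed
  then have "?Q x = x" by (simp add: vec_eq_iff)
  then show ?thesis by (metis orth_proj_in[OF S])
qed

lemma kron_id_right_mult_nth:
  "(kron a (mat 1) ** x) $ (p, k) $ (q, l) = (\<Sum>p'\<in>UNIV. a $ p $ p' * x $ (p', k) $ (q, l))"
  by (simp add: matrix_mult_nth sum_UNIV_prod mat_one_nth if_zero_simps cong del: if_weak_cong)

lemma mult_kron_id_right_nth:
  "(x ** kron a (mat 1)) $ (p, k) $ (q, l) = (\<Sum>q'\<in>UNIV. x $ (p, k) $ (q', l) * a $ q' $ q)"
  by (simp add: matrix_mult_nth sum_UNIV_prod mat_one_nth if_zero_simps cong del: if_weak_cong)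

lemma kron_id_left_mult_nth:
  "(kron (mat 1) z ** x) $ (p, k) $ (q, l) = (\<Sum>k'\<in>UNIV. z $ k $ k' * x $ (p, k') $ (q, l))"
  by (simp add: matrix_mult_nth sum_UNIV_prod mat_one_nth if_zero_simps cong del: if_weak_cong)

lemma mult_kron_id_left_nth:
  "(x ** kron (mat 1) z) $ (p, k) $ (q, l) = (\<Sum>l'\<in>UNIV. x $ (p, k) $ (q, l') * z $ l' $ l)"
  by (simp add: matrix_mult_nth sum_UNIV_prod mat_one_nth if_zero_simps cong del: if_weak_cong)

text \<open>Commuting with \<open>M' \<otimes> 1\<close> puts the \<open>K\<close>-blocks of \<open>x\<close> into \<open>M\<close>, commuting with \<open>1 \<otimes> N'\<close>
  puts its \<open>H\<close>-blocks into \<open>N\<close>; expanding the latter through the projection onto \<open>N\<close> writes \<open>x\<close>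
  as a sum of elementary tensors from \<open>M\<close> and \<open>N\<close>.\<close>

lemma alg_tensor_bicommutant:
  fixes M :: "(complex^'n::finite^'n) set" and N :: "(complex^'k::finite^'k) set"
    and x :: "complex^('n \<times> 'k)^('n \<times> 'k)"
  assumes M: "fd_vNa M" and N: "fd_vNa N"
    and comm_M: "\<And>a. a \<in> commutant M \<Longrightarrow> kron a (mat 1) ** x = x ** kron a (mat 1)"
    and comm_N: "\<And>z. z \<in> commutant N \<Longrightarrow> kron (mat 1) z ** x = x ** kron (mat 1) z"
  shows "x \<in> alg_tensor M N"
proof -
  define block_K where "block_K k l = (\<chi> p q. x $ (p, k) $ (q, l))" for k l
  define block_H where "block_H p q = (\<chi> k l. x $ (p, k) $ (q, l))" for p q
  have block_K_in: "block_K k l \<in> M" for k l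
  proof (rule fd_vNa_bicommutant[OF M])
    have "(block_K k l ** a) $ p $ q = (a ** block_K k l) $ p $ q" if "a \<in> commutant M" for a p q
    proof -
      have "(kron a (mat 1) ** x) $ (p, k) $ (q, l) = (x ** kron a (mat 1)) $ (p, k) $ (q, l)"
        by (simp add: comm_M[OF that])
      then show ?thesis
        unfolding kron_id_right_mult_nth mult_kron_id_right_nth by (simp add: matrix_mult_nth block_K_def)
    qed
    then show "block_K k l \<in> commutant (commutant M)"
      unfolding commutant_def by (simp add: vec_eq_iff)
  qed
  have block_H_in: "block_H p q \<in> N" for p q
  proof (rule fd_vNa_bicommutant[OF N])
    have "(block_H p q ** z) $ k $ l = (z ** block_H p q) $ k $ l" if "z \<in> commutant N" for z k l
    proof -
      have "(kron (mat 1) z ** x) $ (p, k) $ (q, l) = (x ** kron (mat 1) z) $ (p, k) $ (q, l)"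
        by (simp add: comm_N[OF that])
      then show ?thesis
        unfolding kron_id_left_mult_nth mult_kron_id_left_nth by (simp add: matrix_mult_nth block_H_def)
    qed
    then show "block_H p q \<in> commutant (commutant N)"
      unfolding commutant_def by (simp add: vec_eq_iff)
  qed
  have SN: "csubspace N" using N by (simp add: fd_vNa_def)
  let ?Q = "orth_proj N"
  have "x $ (p, k) $ (q, l)
      = (\<Sum>k'\<in>UNIV. \<Sum>l'\<in>UNIV. kron (block_K k' l') (?Q (munit k' l'))) $ (p, k) $ (q, l)"
    for p k q l
  proof -
    have "x $ (p, k) $ (q, l) = ?Q (block_H p q) $ k $ l"
      using orth_proj_fixed[OF SN block_H_in, of p q] by (simp add: block_H_def)
    also have "\<dots> = (\<Sum>k'\<in>UNIV. \<Sum>l'\<in>UNIV. block_H p q $ k' $ l' * ?Q (munit k' l') $ k $ l)"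
      by (rule orth_proj_nth[OF SN])
    finally show ?thesis by (simp add: sum_component block_K_def block_H_def)
  qed
  then have "x = (\<Sum>k'\<in>UNIV. \<Sum>l'\<in>UNIV. kron (block_K k' l') (?Q (munit k' l')))"
    by (simp add: vec_eq_iff split_paired_All)
  also have "\<dots> \<in> alg_tensor M N"
    by (intro csubspace_sum[OF csubspace_alg_tensor] kron_in_alg_tensor block_K_in orth_proj_in[OF SN])
  finally show ?thesis .
qed

lemma fd_vNa_madj_proj_slice:
  assumes M: "fd_vNa M" and W: "csubspace W"
    and module: "\<And>c X. c \<in> commutant M \<Longrightarrow> X \<in> W \<Longrightarrow> c ** X \<in> W"
  shows "madj (proj_slice W a b) \<in> M"
proof (rule fd_vNa_bicommutant[OF M])
  have "c ** madj (proj_slice W a b) = madj (proj_slice W a b) ** c" if "c \<in> commutant M" for c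
    using module that commutant_madj[OF M that] by (intro madj_proj_slice_commute[OF W]) auto
  then show "madj (proj_slice W a b) \<in> commutant (commutant M)"
    unfolding commutant_def by auto
qed

lemma ptrK_kron_mult: "c ** ptrK X = ptrK (kron c (mat 1) ** X)"
proof -
  have "(c ** ptrK X) $ i $ j = (\<Sum>p\<in>UNIV. \<Sum>k\<in>UNIV. c $ i $ k * X $ (k, p) $ (j, p))" for i j
    by (simp add: matrix_mult_nth ptrK_def sum_distrib_left) (rule sum.swap)
  then show ?thesis by (simp add: vec_eq_iff ptrK_def kron_id_right_mult_nth)
qed

lemma q_multi_relation_V_tilde_module:
  assumes "q_multi_relation M N V" "c \<in> commutant M" "X \<in> V_tilde V"
  shows "c ** X \<in> V_tilde V"
  using assms unfolding q_multi_relation_def V_tilde_def by (auto simp: ptrK_kron_mult)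

lemma q_multi_relation_madj_proj_slice:
  assumes M: "fd_vNa M" and N: "fd_vNa N" and min_N: "minimally_represented N"
    and V: "q_multi_relation M N V"
  shows "madj (proj_slice V a b) \<in> alg_tensor M N"
proof -
  have SV: "csubspace V"
    and mod_M: "\<And>c X. c \<in> commutant M \<Longrightarrow> X \<in> V \<Longrightarrow> kron c (mat 1) ** X \<in> V"
    and mod_N: "\<And>z X. z \<in> center N \<Longrightarrow> X \<in> V \<Longrightarrow> kron (mat 1) z ** X \<in> V"
    using V unfolding q_multi_relation_def by auto
  show ?thesis
  proof (rule alg_tensor_bicommutant[OF M N])
    fix c assume "c \<in> commutant M"
    then show "kron c (mat 1) ** madj (proj_slice V a b) = madj (proj_slice V a b) ** kron c (mat 1)"
      using mod_M commutant_madj[OF M]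
      by (intro madj_proj_slice_commute[OF SV]) (auto simp: madj_kron madj_mat_one)
  next
    fix z assume "z \<in> commutant N"
    \<comment> \<open>minimality turns the \<open>Z(N)\<close>-module property of \<open>V\<close> into an \<open>N'\<close>-module property\<close>
    then have "z \<in> center N" "madj z \<in> center N"
      using min_N commutant_madj[OF N] by (auto simp: minimally_represented_def)
    then show "kron (mat 1) z ** madj (proj_slice V a b) = madj (proj_slice V a b) ** kron (mat 1) z"
      using mod_N by (intro madj_proj_slice_commute[OF SV]) (auto simp: madj_kron madj_mat_one)
  qed
qed

theorem theorem4p13:
  fixes M :: "(complex^'n::finite^'n) set"
    and N :: "(complex^'k::finite^'k) set"
    and V :: "(complex^('n\<times>'k)^('n\<times>'k)) set"
  assumes "fd_vNa M" and "fd_vNa N"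
    and "minimally_represented M" and "minimally_represented N"
    and "q_multi_relation M N V"
  shows "cp_on (alg_tensor M N) (A_PV V)
    \<and> cp_on M (A_SV V)
    \<and> cp_on M (A_PVt V)
    \<and> schur_idempotent (alg_tensor M N) (A_PV V)
    \<and> schur_idempotent M (A_PVt V)"
proof -
  have V: "csubspace V" using assms(5) by (simp add: q_multi_relation_def)
  have "madj (proj_slice V a b) \<in> alg_tensor M N" for a b
    using assms(1,2,4,5) by (rule q_multi_relation_madj_proj_slice)
  moreover have "madj (proj_slice (V_tilde V) a b) \<in> M" for a b
    using assms(1) csubspace_V_tilde[OF V] q_multi_relation_V_tilde_module[OF assms(5)]
    by (rule fd_vNa_madj_proj_slice)
  ultimately show ?thesis
    by (simp add: V csubspace_V_tilde A_PV_eq_adjacency_op A_PVt_eq_adjacency_op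
        cp_on_adjacency_op cp_on_A_SV schur_idempotent_adjacency_op)
qed

end
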